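(* In the setting of the context (soft interventions, one per latent node, generic parameters), for $k\in[q]$ let $\Delta^{(k)}=(I-\Lambda^{(k)})^{-1}-(I-\Lambda^{(0)})^{-1}$. Then $\operatorname{rank}(\Delta^{(k)})\le1$, with equality if and only if $\mathrm{an}(k)\neq\emptyset$.
   Context: $\Lambda^{(0)}\in\mathbb{R}^{q\times q}$ has $\lambda^{(0)}_{i,j}\ne0$ iff $j\to i$ is an edge of a DAG $\mathcal{G}$ on $[q]$, with generic nonzero entries. For each $k\in[q]$, context $k$ is a soft intervention on node $k$: $\Lambda^{(k)}$ agrees with $\Lambda^{(0)}$ except in row $k$, whose entries are generic with $\lambda^{(k)}_{k,j}\ne\lambda^{(0)}_{k,j}$ whenever $\lambda^{(0)}_{k,j}\ne0$ and $\lambda^{(k)}_{k,j}=0$ otherwise. $\mathrm{an}(k)$ is the set of ancestors of $k$ in $\mathcal{G}$ (nodes $m\ne k$ with a directed path $m\to\cdots\to k$). *)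

theory Defs
  imports "HOL-Analysis.Analysis"
begin

text \<open>A directed graph on the node type 'n is given by an edge predicate
  E, where E j i means that there is an edge j -> i.\<close>

definition edge_rel :: "('n \<Rightarrow> 'n \<Rightarrow> bool) \<Rightarrow> ('n \<times> 'n) set" where
  "edge_rel E = {(j, i). E j i}"

definition is_dag :: "('n \<Rightarrow> 'n \<Rightarrow> bool) \<Rightarrow> bool" where
  "is_dag E \<longleftrightarrow> acyclic (edge_rel E)"

definition ancestors :: "('n \<Rightarrow> 'n \<Rightarrow> bool) \<Rightarrow> 'n \<Rightarrow> 'n set" where
  "ancestors E k = {m. m \<noteq> k \<and> (m, k) \<in> (edge_rel E)\<^sup>+}"

end

theory Submission
  imports Defs
begin

text \<open>A soft intervention on node k only changes row k, so D = L k - L0 is supported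
  on row k: it has rank at most one, and it is nonzero exactly when row k of L0 is, i.e.
  when k has a parent, i.e. when k has an ancestor. Both I - L0 and I - L k are invertible
  because their off-identity parts are supported on the edges of a DAG, and the resolvent
  identity (I - L k)\<inverse> - (I - L0)\<inverse> = (I - L k)\<inverse> D (I - L0)\<inverse> shows that the
  difference of the inverses has the same rank as D.\<close>

lemma matrix_diff_ldistrib:
  fixes A :: "'a::ring_1^'n^'m" and B C :: "'a^'p^'n"
  shows "A ** (B - C) = A ** B - A ** C"
  by (simp add: vec_eq_iff matrix_matrix_mult_def sum_subtractf algebra_simps)

lemma matrix_diff_rdistrib:
  fixes A B :: "'a::ring_1^'n^'m" and C :: "'a^'p^'n"
  shows "(A - B) ** C = A ** C - B ** C"
  by (simp add: vec_eq_iff matrix_matrix_mult_def sum_subtractf algebra_simps)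

lemma
  fixes A :: "'a::semiring_1^'n^'m"
  assumes "invertible A"
  shows matrix_inv_right: "A ** matrix_inv A = mat 1"
    and matrix_inv_left: "matrix_inv A ** A = mat 1"
proof -
  have "A ** matrix_inv A = mat 1 \<and> matrix_inv A ** A = mat 1"
    using assms unfolding invertible_def matrix_inv_def by (rule someI_ex)
  then show "A ** matrix_inv A = mat 1" "matrix_inv A ** A = mat 1"
    by auto
qed

lemma invertible_matrix_inv:
  fixes A :: "'a::semiring_1^'n^'m"
  assumes "invertible A"
  shows "invertible (matrix_inv A)"
  using matrix_inv_left[OF assms] matrix_inv_right[OF assms]
  unfolding invertible_def by blast

lemma matrix_inv_diff:
  fixes A B :: "'a::ring_1^'n^'n"
  assumes "invertible A" "invertible B"
  shows "matrix_inv B - matrix_inv A = matrix_inv B ** (A - B) ** matrix_inv A"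
proof -
  have "matrix_inv B ** (A - B) ** matrix_inv A
      = matrix_inv B ** (A ** matrix_inv A) - (matrix_inv B ** B) ** matrix_inv A"
    by (simp add: matrix_diff_ldistrib matrix_diff_rdistrib matrix_mul_assoc)
  then show ?thesis
    by (simp add: matrix_inv_right[OF assms(1)] matrix_inv_left[OF assms(2)])
qed

lemma rank_invertible_mult:
  fixes P :: "real^'m^'m" and D :: "real^'n^'m" and Q :: "real^'n^'n"
  assumes "invertible P" "invertible Q"
  shows "rank (P ** D ** Q) = rank D"
proof (rule antisym)
  show "rank (P ** D ** Q) \<le> rank D"
    by (meson order_trans rank_mul_le_left rank_mul_le_right)
  have "matrix_inv P ** (P ** D ** Q) ** matrix_inv Q
      = (matrix_inv P ** P) ** D ** (Q ** matrix_inv Q)"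
    by (simp add: matrix_mul_assoc)
  then have "D = matrix_inv P ** (P ** D ** Q) ** matrix_inv Q"
    by (simp add: matrix_inv_left[OF assms(1)] matrix_inv_right[OF assms(2)])
  then show "rank D \<le> rank (P ** D ** Q)"
    by (metis order_trans rank_mul_le_left rank_mul_le_right)
qed

lemma rank_le_1_if_single_nonzero_row:
  fixes D :: "real^'n^'m"
  assumes "\<And>i j. i \<noteq> k \<Longrightarrow> D $ i $ j = 0"
  shows "rank D \<le> 1"
proof -
  have "row i D = 0" if "i \<noteq> k" for i
    using assms that by (simp add: row_def vec_eq_iff)
  then have "rows D \<subseteq> {0, row k D}"
    unfolding rows_def by (smt (verit) insert_iff mem_Collect_eq subsetI)
  then have "dim (rows D) \<le> dim {0, row k D}"
    by (rule dim_subset)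
  also have "\<dots> = dim {row k D}"
    by (simp add: dim_insert span_zero)
  also have "\<dots> \<le> 1"
    using dim_le_card'[of "{row k D}"] by simp
  finally show ?thesis
    by (simp add: row_rank_def)
qed

lemma invertible_id_minus_wf_support:
  fixes M :: "'a::field^'n::finite^'n"
  assumes wf: "wf R" and supp: "\<And>i j. M $ i $ j \<noteq> 0 \<Longrightarrow> (j, i) \<in> R"
  shows "invertible (mat 1 - M)"
  unfolding invertible_left_inverse matrix_left_invertible_ker
proof (intro allI impI)
  fix x :: "'a^'n"
  assume ker: "(mat 1 - M) *v x = 0"
  have fixpoint: "x $ i = (\<Sum>j\<in>UNIV. M $ i $ j * x $ j)" for i
  proof -
    have "(mat 1 - M) *v x = x - M *v x"
      by (simp add: matrix_vector_mult_diff_rdistrib)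
    then have "(x - M *v x) $ i = 0"
      using ker by simp
    then show ?thesis
      by (simp add: matrix_vector_mult_def)
  qed
  have "x $ i = 0" for i
    using wf
  proof (induction i rule: wf_induct_rule)
    case (less i)
    have "(\<Sum>j\<in>UNIV. M $ i $ j * x $ j) = 0"
    proof (rule sum.neutral, intro ballI)
      fix j
      show "M $ i $ j * x $ j = 0"
        using supp[of i j] less by (cases "M $ i $ j = 0") auto
    qed
    then show ?case
      using fixpoint[of i] by simp
  qed
  then show "x = 0"
    by (simp add: vec_eq_iff)
qed

lemma wf_edge_rel:
  fixes E :: "'n::finite \<Rightarrow> 'n \<Rightarrow> bool"
  assumes "is_dag E"
  shows "wf (edge_rel E)"
  using assms unfolding is_dag_def by (intro finite_acyclic_wf) auto

lemma ancestors_nonempty_iff_parent: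
  assumes "is_dag E"
  shows "ancestors E k \<noteq> {} \<longleftrightarrow> (\<exists>j. E j k)"
proof
  assume "ancestors E k \<noteq> {}"
  then obtain m where "(m, k) \<in> (edge_rel E)\<^sup>+"
    by (auto simp: ancestors_def)
  then obtain j where "(j, k) \<in> edge_rel E"
    by (meson tranclE)
  then show "\<exists>j. E j k"
    by (auto simp: edge_rel_def)
next
  assume "\<exists>j. E j k"
  then obtain j where jk: "E j k" ..
  moreover have "j \<noteq> k"
    using jk assms by (auto simp: is_dag_def acyclic_def edge_rel_def)
  ultimately have "j \<in> ancestors E k"
    by (auto simp: ancestors_def edge_rel_def)
  then show "ancestors E k \<noteq> {}"
    by blast
qed

definition soft_intervention :: "'n \<Rightarrow> 'a::zero^'n^'n \<Rightarrow> 'a^'n^'n \<Rightarrow> bool" where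
  "soft_intervention k L L' \<longleftrightarrow>
     (\<forall>i j. i \<noteq> k \<longrightarrow> L' $ i $ j = L $ i $ j) \<and>
     (\<forall>j. L $ k $ j \<noteq> 0 \<longrightarrow> L' $ k $ j \<noteq> L $ k $ j) \<and>
     (\<forall>j. L $ k $ j = 0 \<longrightarrow> L' $ k $ j = 0)"

lemma soft_intervention_support:
  assumes "soft_intervention k L L'" "L' $ i $ j \<noteq> 0"
  shows "L $ i $ j \<noteq> 0"
  using assms unfolding soft_intervention_def by (cases "i = k") auto

lemma soft_intervention_rank_diff_le_1:
  fixes L L' :: "real^'n^'n"
  assumes "soft_intervention k L L'"
  shows "rank (L' - L) \<le> 1"
  using assms unfolding soft_intervention_def
  by (intro rank_le_1_if_single_nonzero_row[of k]) simp

lemma soft_intervention_diff_eq_0_iff: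
  fixes L L' :: "'a::ab_group_add^'n^'n"
  assumes "soft_intervention k L L'"
  shows "L' - L = 0 \<longleftrightarrow> (\<forall>j. L $ k $ j = 0)"
proof
  assume "L' - L = 0"
  then have "L' = L"
    by simp
  then show "\<forall>j. L $ k $ j = 0"
    using assms unfolding soft_intervention_def by auto
next
  assume "\<forall>j. L $ k $ j = 0"
  then have "L' $ i $ j = L $ i $ j" for i j
    using assms unfolding soft_intervention_def by (cases "i = k") auto
  then show "L' - L = 0"
    by (simp add: vec_eq_iff)
qed

theorem proposition3p7:
  fixes E :: "'n::finite \<Rightarrow> 'n \<Rightarrow> bool"
    and L0 :: "real^'n^'n"
    and L :: "'n \<Rightarrow> real^'n^'n"
    and k :: 'n
  assumes dag: "is_dag E"
    and supp0: "\<And>i j. L0 $ i $ j \<noteq> 0 \<longleftrightarrow> E j i"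
    and other_rows: "\<And>k' i j. i \<noteq> k' \<Longrightarrow> L k' $ i $ j = L0 $ i $ j"
    and changed: "\<And>k' j. L0 $ k' $ j \<noteq> 0 \<Longrightarrow> L k' $ k' $ j \<noteq> L0 $ k' $ j"
    and zero: "\<And>k' j. L0 $ k' $ j = 0 \<Longrightarrow> L k' $ k' $ j = 0"
  shows "rank (matrix_inv (mat 1 - L k) - matrix_inv (mat 1 - L0)) \<le> 1 \<and>
         (rank (matrix_inv (mat 1 - L k) - matrix_inv (mat 1 - L0)) = 1
            \<longleftrightarrow> ancestors E k \<noteq> {})"
proof -
  have si: "soft_intervention k L0 (L k)"
    using other_rows changed zero by (simp add: soft_intervention_def)
  have inv0: "invertible (mat 1 - L0)" and invk: "invertible (mat 1 - L k)"
    using invertible_id_minus_wf_support[OF wf_edge_rel[OF dag]]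
      supp0 soft_intervention_support[OF si]
    by (auto simp: edge_rel_def)
  have "rank (matrix_inv (mat 1 - L k) - matrix_inv (mat 1 - L0)) = rank (L k - L0)"
    using rank_invertible_mult[OF invertible_matrix_inv[OF invk] invertible_matrix_inv[OF inv0]]
    by (simp add: matrix_inv_diff[OF inv0 invk])
  moreover have "L k - L0 = 0 \<longleftrightarrow> ancestors E k = {}"
    using soft_intervention_diff_eq_0_iff[OF si] supp0 ancestors_nonempty_iff_parent[OF dag, of k]
    by blast
  ultimately show ?thesis
    using soft_intervention_rank_diff_le_1[OF si] rank_eq_0[of "L k - L0"] by auto
qed

end
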